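(* For every positive integer $t$ there exist constants $\alpha,\beta,\gamma>0$ such that for all positive integers $s$ and $n\geq 2$, $$R_t(s,n)\leq \alpha s^{\beta} n\cdot (\log n)^{\gamma}.$$
   Context: A function $f:\mathbb{R}^{m}\to\mathbb{R}$ is linear if $f(\mathbf{x})=b+\sum_{i=1}^m a_i\mathbf{x}(i)$ for some reals $a_1,\dots,a_m,b$. A (finite, simple) graph $G$ is semilinear of complexity $t$ if $V(G)\subset\mathbb{R}^d$ for some positive integer $d$, and there are $t$ linear functions $f_1,\dots,f_t:\mathbb{R}^d\times\mathbb{R}^d\to\mathbb{R}$ and a Boolean function $\phi:\{\mathrm{F},\mathrm{T}\}^{3t}\to\{\mathrm{F},\mathrm{T}\}$ such that for distinct $\mathbf{x},\mathbf{y}\in V(G)$, $\{\mathbf{x},\mathbf{y}\}$ is an edge iff $\phi\big(\{f_i(\mathbf{x},\mathbf{y})<0,\ f_i(\mathbf{x},\mathbf{y})\leq 0,\ f_i(\mathbf{x},\mathbf{y})=0\}_{i\in[t]}\big)=\mathrm{T}$; it is assumed that this truth value is unchanged when $\mathbf{x}$ and $\mathbf{y}$ are swapped. $R_t(s,n)$ denotes the smallest $N$ such that every semilinear graph of complexity $t$ on $N$ vertices contains a clique of size $s$ or an independent set of size $n$. *)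

theory Defs
  imports Complex_Main
begin

text \<open>Points of R^d are real lists of length d. A linear function
  f : R^d x R^d -> R is given by a constant b and coefficient sequences a, c:
  f(x,y) = b + sum_{j<d} a j * x!j + sum_{j<d} c j * y!j.\<close>

definition lin_eval :: "nat \<Rightarrow> real \<Rightarrow> (nat \<Rightarrow> real) \<Rightarrow> (nat \<Rightarrow> real)
    \<Rightarrow> real list \<Rightarrow> real list \<Rightarrow> real" where
  "lin_eval d b a c x y = b + (\<Sum>j<d. a j * x ! j) + (\<Sum>j<d. c j * y ! j)"

definition sign_pattern :: "nat \<Rightarrow> (nat \<Rightarrow> real list \<Rightarrow> real list \<Rightarrow> real)
    \<Rightarrow> real list \<Rightarrow> real list \<Rightarrow> bool list" where
  "sign_pattern t f x y =
     concat (map (\<lambda>i. [f i x y < 0, f i x y \<le> 0, f i x y = 0]) [0..<t])"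

text \<open>A finite simple graph with vertex set V (a finite subset of R^d) and
  edge relation E (only its values on distinct vertices matter) is semilinear
  of complexity t.\<close>

definition semilinear_graph :: "nat \<Rightarrow> real list set \<Rightarrow> (real list \<Rightarrow> real list \<Rightarrow> bool) \<Rightarrow> bool" where
  "semilinear_graph t V E \<longleftrightarrow>
     finite V \<and>
     (\<forall>x\<in>V. \<forall>y\<in>V. x \<noteq> y \<longrightarrow> (E x y \<longleftrightarrow> E y x)) \<and>
     (\<exists>d::nat. d > 0 \<and> (\<forall>x\<in>V. length x = d) \<and>
       (\<exists>(b :: nat \<Rightarrow> real) (a :: nat \<Rightarrow> nat \<Rightarrow> real) (c :: nat \<Rightarrow> nat \<Rightarrow> real)
          (\<phi> :: bool list \<Rightarrow> bool).
          \<forall>x\<in>V. \<forall>y\<in>V. x \<noteq> y \<longrightarrow>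
            (E x y \<longleftrightarrow> \<phi> (sign_pattern t (\<lambda>i. lin_eval d (b i) (a i) (c i)) x y))))"

definition has_clique :: "real list set \<Rightarrow> (real list \<Rightarrow> real list \<Rightarrow> bool) \<Rightarrow> nat \<Rightarrow> bool" where
  "has_clique V E s \<longleftrightarrow>
     (\<exists>K\<subseteq>V. card K = s \<and> (\<forall>x\<in>K. \<forall>y\<in>K. x \<noteq> y \<longrightarrow> E x y))"

definition has_indep :: "real list set \<Rightarrow> (real list \<Rightarrow> real list \<Rightarrow> bool) \<Rightarrow> nat \<Rightarrow> bool" where
  "has_indep V E n \<longleftrightarrow>
     (\<exists>I\<subseteq>V. card I = n \<and> (\<forall>x\<in>I. \<forall>y\<in>I. x \<noteq> y \<longrightarrow> \<not> E x y))"

definition R_semilin :: "nat \<Rightarrow> nat \<Rightarrow> nat \<Rightarrow> nat" where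
  "R_semilin t s n = (LEAST N. \<forall>V E. semilinear_graph t V E \<and> card V = N \<longrightarrow>
                          has_clique V E s \<or> has_indep V E n)"

end

theory Submission
  imports Defs "HOL-Library.FuncSet" "HOL-Library.Log_Nat" "HOL-Analysis.Harmonic_Numbers"
begin

text \<open>Write each linear form as f_i(x, y) = u_i(x) - w_i(y). Replace the values of u_i and
  w_i on the N vertices by their ranks, which are smaller than 2^D with D about log N, and
  compare binary expansions: a vertex x gets the type consisting of the level at which the
  expansions of its two ranks split and the order of these ranks, and the label p_i(x), the
  common prefix above that level. For vertices of one type, the sign of f_i(x, y) is decided
  by the order of p_i(x) and p_i(y) (and by the type if they are equal). So within a type
  class, the edge relation is a function of the transitive comparison pattern
  (sgn (p_i(x) - p_i(y)))_i, of which there are 3^t. Ordered along an enumeration of the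
  vertices, each pattern is a strict partial order whose chains are cliques if the pattern
  produces edges; Mirsky's height functions of these orders then split every type class into
  s^(3^t) independent sets. Hence N \<le> (3(D + 1))^t s^(3^t) (n - 1), i.e.
  N \<le> n s^(3^t) (6 ln N + 9)^t, and solving this for N gives the polynomial-times-polylog
  bound.\<close>

definition clique :: "('a \<Rightarrow> 'a \<Rightarrow> bool) \<Rightarrow> 'a set \<Rightarrow> bool" where
  "clique E K \<longleftrightarrow> (\<forall>x\<in>K. \<forall>y\<in>K. x \<noteq> y \<longrightarrow> E x y)"

definition independent_set :: "('a \<Rightarrow> 'a \<Rightarrow> bool) \<Rightarrow> 'a set \<Rightarrow> bool" where
  "independent_set E I \<longleftrightarrow> (\<forall>x\<in>I. \<forall>y\<in>I. x \<noteq> y \<longrightarrow> \<not> E x y)"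

lemma clique_subset: "clique E K \<Longrightarrow> L \<subseteq> K \<Longrightarrow> clique E L"
  unfolding clique_def by blast

lemma independent_set_subset: "independent_set E I \<Longrightarrow> J \<subseteq> I \<Longrightarrow> independent_set E J"
  unfolding independent_set_def by blast

lemma card_less_if_no_large_clique:
  assumes "finite K" "clique E K" "\<And>L. L \<subseteq> K \<Longrightarrow> card L = s \<Longrightarrow> \<not> clique E L"
  shows "card K < s"
proof (rule ccontr)
  assume "\<not> card K < s"
  then obtain L where "L \<subseteq> K" "card L = s"
    by (meson not_less obtain_subset_with_card_n)
  then show False
    using assms clique_subset by blast
qed

lemma card_le_if_fibres_small:
  assumes "finite P" "f ` V \<subseteq> P" "\<And>c. c \<in> P \<Longrightarrow> card {x\<in>V. f x = c} \<le> m"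
  shows "card V \<le> card P * m"
proof -
  have "V = (\<Union>c\<in>P. {x\<in>V. f x = c})"
    using assms(2) by blast
  then have "card V \<le> (\<Sum>c\<in>P. card {x\<in>V. f x = c})"
    by (metis card_UN_le[OF \<open>finite P\<close>])
  also have "\<dots> \<le> card P * m"
    using sum_bounded_above[of P "\<lambda>c. card {x\<in>V. f x = c}" m] assms(3) by simp
  finally show ?thesis .
qed

lemma card_le_if_colour_classes_independent:
  assumes "finite P" "col ` V \<subseteq> P"
    and classes: "\<And>c. independent_set E {x\<in>V. col x = c}"
    and no_indep: "\<And>I. I \<subseteq> V \<Longrightarrow> card I = n \<Longrightarrow> \<not> independent_set E I"
  shows "card V \<le> card P * (n - 1)"
proof (rule card_le_if_fibres_small[OF assms(1,2)])
  fix c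
  show "card {x\<in>V. col x = c} \<le> n - 1"
  proof (rule ccontr)
    assume "\<not> ?thesis"
    then have "n \<le> card {x\<in>V. col x = c}"
      by linarith
    then obtain I where "I \<subseteq> {x\<in>V. col x = c}" "card I = n"
      using obtain_subset_with_card_n by blast
    then show False
      using no_indep classes independent_set_subset by blast
  qed
qed

definition chains_below :: "('a \<Rightarrow> 'a \<Rightarrow> bool) \<Rightarrow> 'a set \<Rightarrow> 'a \<Rightarrow> 'a set set" where
  "chains_below T A x = {C. C \<subseteq> A \<and> clique (\<lambda>x y. T x y \<or> T y x) C \<and> (\<forall>z\<in>C. T z x)}"

definition chain_height :: "('a \<Rightarrow> 'a \<Rightarrow> bool) \<Rightarrow> 'a set \<Rightarrow> 'a \<Rightarrow> nat" where
  "chain_height T A x = Max (card ` chains_below T A x)"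

lemma finite_chains_below: "finite A \<Longrightarrow> finite (chains_below T A x)"
  by (rule finite_subset[of _ "Pow A"]) (auto simp: chains_below_def)

lemma card_le_chain_height: "finite A \<Longrightarrow> C \<in> chains_below T A x \<Longrightarrow> card C \<le> chain_height T A x"
  unfolding chain_height_def by (rule Max_ge) (simp_all add: finite_chains_below)

lemma chain_height_attained:
  assumes "finite A"
  obtains C where "C \<in> chains_below T A x" "card C = chain_height T A x"
proof -
  have "{} \<in> chains_below T A x"
    by (simp add: chains_below_def clique_def)
  then have "chain_height T A x \<in> card ` chains_below T A x"
    unfolding chain_height_def using finite_chains_below[OF assms] by (intro Max_in) auto
  then obtain C where "C \<in> chains_below T A x" "chain_height T A x = card C"
    by blast
  then show thesis
    using that by simp
qed

lemma insert_chain_below: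
  assumes "finite A" "C \<in> chains_below T A x" "x \<in> A" "\<not> T x x"
  shows "insert x C \<subseteq> A" "clique (\<lambda>x y. T x y \<or> T y x) (insert x C)"
    and "card (insert x C) = Suc (card C)"
proof -
  have "finite C" "x \<notin> C"
    using assms finite_subset by (auto simp: chains_below_def)
  then show "insert x C \<subseteq> A" "clique (\<lambda>x y. T x y \<or> T y x) (insert x C)"
      "card (insert x C) = Suc (card C)"
    using assms by (auto simp: chains_below_def clique_def)
qed

lemma chain_height_strict_mono:
  assumes "finite A"
    and trans: "\<And>x y z. x \<in> A \<Longrightarrow> y \<in> A \<Longrightarrow> z \<in> A \<Longrightarrow> T x y \<Longrightarrow> T y z \<Longrightarrow> T x z"
    and irrefl: "\<And>x. x \<in> A \<Longrightarrow> \<not> T x x"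
    and "x \<in> A" "y \<in> A" "T x y"
  shows "chain_height T A x < chain_height T A y"
proof -
  obtain C where C: "C \<in> chains_below T A x" "card C = chain_height T A x"
    using chain_height_attained[OF \<open>finite A\<close>] by blast
  have "T z y" if "z \<in> insert x C" for z
  proof (cases "z = x")
    case False
    then have "z \<in> A" "T z x"
      using that C(1) by (auto simp: chains_below_def)
    then show ?thesis
      using trans \<open>x \<in> A\<close> \<open>y \<in> A\<close> \<open>T x y\<close> by blast
  qed (use \<open>T x y\<close> in simp)
  note insert_x = insert_chain_below[OF \<open>finite A\<close> C(1) \<open>x \<in> A\<close> irrefl[OF \<open>x \<in> A\<close>]]
  have "insert x C \<in> chains_below T A y"
    using insert_x(1,2) \<open>\<And>z. z \<in> insert x C \<Longrightarrow> T z y\<close> by (simp add: chains_below_def)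
  then have "Suc (card C) \<le> chain_height T A y"
    using card_le_chain_height[OF \<open>finite A\<close>] insert_x(3) by fastforce
  then show ?thesis
    using C(2) by simp
qed

lemma chain_height_less:
  assumes "finite A" "x \<in> A" "\<not> T x x"
    and short_chains: "\<And>C. C \<subseteq> A \<Longrightarrow> clique (\<lambda>x y. T x y \<or> T y x) C \<Longrightarrow> card C < s"
  shows "chain_height T A x < s"
proof -
  obtain C where C: "C \<in> chains_below T A x" "card C = chain_height T A x"
    using chain_height_attained[OF \<open>finite A\<close>] by blast
  have "card (insert x C) < s"
    using short_chains insert_chain_below[OF assms(1) C(1) assms(2,3)] by blast
  then show ?thesis
    using insert_chain_below(3)[OF assms(1) C(1) assms(2,3)] C(2) by simp
qed

text \<open>Ordered along an injection e into the naturals, the pairs with a given comparison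
  value c form a strict partial order. If some such pair is an edge, then all are, so its
  chains are cliques.\<close>

definition pattern_order :: "('a \<Rightarrow> nat) \<Rightarrow> ('a \<Rightarrow> 'a \<Rightarrow> 'c) \<Rightarrow> 'a set \<Rightarrow> 'c \<Rightarrow> 'a \<Rightarrow> 'a \<Rightarrow> bool" where
  "pattern_order e cmp V c x y \<longleftrightarrow> x \<in> V \<and> y \<in> V \<and> cmp x y = c \<and> e x < e y"

lemma chain_height_pattern_order_strict_mono:
  assumes "finite V"
    and cmp_trans: "\<And>x y z. x \<in> V \<Longrightarrow> y \<in> V \<Longrightarrow> z \<in> V \<Longrightarrow> cmp x y = cmp y z \<Longrightarrow> cmp x z = cmp x y"
    and "pattern_order e cmp V c x y"
  shows "chain_height (pattern_order e cmp V c) V x < chain_height (pattern_order e cmp V c) V y"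
proof -
  have trans: "pattern_order e cmp V c x z"
    if "x \<in> V" "y \<in> V" "z \<in> V" "pattern_order e cmp V c x y" "pattern_order e cmp V c y z" for x y z
    using that cmp_trans[of x y z] by (auto simp: pattern_order_def)
  have irrefl: "\<not> pattern_order e cmp V c x x" for x
    by (simp add: pattern_order_def)
  have "x \<in> V" "y \<in> V"
    using assms(3) by (simp_all add: pattern_order_def)
  with \<open>finite V\<close> trans irrefl show ?thesis
    using assms(3) by (rule chain_height_strict_mono)
qed

lemma chain_height_pattern_order_less:
  assumes "finite V"
    and sym: "\<And>x y. x \<in> V \<Longrightarrow> y \<in> V \<Longrightarrow> x \<noteq> y \<Longrightarrow> E x y = E y x"
    and determined: "\<And>x y x' y'. x \<in> V \<Longrightarrow> y \<in> V \<Longrightarrow> x' \<in> V \<Longrightarrow> y' \<in> V \<Longrightarrow>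
      x \<noteq> y \<Longrightarrow> x' \<noteq> y' \<Longrightarrow> cmp x y = cmp x' y' \<Longrightarrow> E x y = E x' y'"
    and no_clique: "\<And>K. K \<subseteq> V \<Longrightarrow> card K = s \<Longrightarrow> \<not> clique E K"
    and edge: "pattern_order e cmp V c x0 y0" "E x0 y0"
    and "x \<in> V"
  shows "chain_height (pattern_order e cmp V c) V x < s"
proof (rule chain_height_less[OF \<open>finite V\<close> \<open>x \<in> V\<close>])
  let ?T = "pattern_order e cmp V c"
  show "\<not> ?T x x"
    by (simp add: pattern_order_def)
  have T_edge: "E x y" if "?T x y" for x y
    using that edge determined[of x0 y0 x y] by (auto simp: pattern_order_def)
  fix C assume C: "C \<subseteq> V" and chain: "clique (\<lambda>x y. ?T x y \<or> ?T y x) C"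
  show "card C < s"
  proof (rule card_less_if_no_large_clique)
    show "finite C"
      using C \<open>finite V\<close> finite_subset by blast
    show "clique E C"
      unfolding clique_def
    proof (intro ballI impI)
      fix x y assume "x \<in> C" "y \<in> C" "x \<noteq> y"
      then consider "?T x y" | "?T y x"
        using chain by (auto simp: clique_def)
      then show "E x y"
      proof cases
        case 2
        then show ?thesis
          using T_edge sym \<open>x \<in> C\<close> \<open>y \<in> C\<close> C \<open>x \<noteq> y\<close> by blast
      qed (use T_edge in blast)
    qed
    show "\<And>L. L \<subseteq> C \<Longrightarrow> card L = s \<Longrightarrow> \<not> clique E L"
      using no_clique C by blast
  qed
qed

lemma card_le_if_edges_determined_by_comparison:
  fixes cmp :: "'a \<Rightarrow> 'a \<Rightarrow> 'c"
  assumes "finite V"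
    and sym: "\<And>x y. x \<in> V \<Longrightarrow> y \<in> V \<Longrightarrow> x \<noteq> y \<Longrightarrow> E x y = E y x"
    and cmp_trans: "\<And>x y z. x \<in> V \<Longrightarrow> y \<in> V \<Longrightarrow> z \<in> V \<Longrightarrow> cmp x y = cmp y z \<Longrightarrow> cmp x z = cmp x y"
    and determined: "\<And>x y x' y'. x \<in> V \<Longrightarrow> y \<in> V \<Longrightarrow> x' \<in> V \<Longrightarrow> y' \<in> V \<Longrightarrow>
      x \<noteq> y \<Longrightarrow> x' \<noteq> y' \<Longrightarrow> cmp x y = cmp x' y' \<Longrightarrow> E x y = E x' y'"
    and no_clique: "\<And>K. K \<subseteq> V \<Longrightarrow> card K = s \<Longrightarrow> \<not> clique E K"
    and no_indep: "\<And>I. I \<subseteq> V \<Longrightarrow> card I = n \<Longrightarrow> \<not> independent_set E I"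
    and cmps: "\<And>x y. x \<in> V \<Longrightarrow> y \<in> V \<Longrightarrow> cmp x y \<in> Cmps" "finite Cmps"
  shows "card V \<le> s ^ card Cmps * (n - 1)"
proof -
  obtain e :: "'a \<Rightarrow> nat" where e: "inj_on e V"
    using finite_imp_inj_to_nat_seg[OF \<open>finite V\<close>] by blast
  define edge where "edge c \<longleftrightarrow> (\<exists>x y. pattern_order e cmp V c x y \<and> E x y)" for c
  define col where "col x =
    restrict (\<lambda>c. if edge c then chain_height (pattern_order e cmp V c) V x else 0) Cmps" for x
  have "s > 0"
    using no_clique[of "{}"] by (auto simp: clique_def)
  have height_less: "chain_height (pattern_order e cmp V c) V x < s" if "edge c" "x \<in> V" for c x
  proof -
    obtain x0 y0 where "pattern_order e cmp V c x0 y0" "E x0 y0"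
      using \<open>edge c\<close> edge_def by blast
    with \<open>finite V\<close> sym determined no_clique show ?thesis
      using \<open>x \<in> V\<close> by (rule chain_height_pattern_order_less)
  qed
  with \<open>s > 0\<close> have col_range: "col ` V \<subseteq> Cmps \<rightarrow>\<^sub>E {..<s}"
    by (auto simp: col_def)
  have no_forward_edge: "\<not> E x y" if "x \<in> V" "y \<in> V" "e x < e y" "col x = col y" for x y
  proof
    assume "E x y"
    define c where "c = cmp x y"
    have "pattern_order e cmp V c x y"
      using that by (simp add: pattern_order_def c_def)
    moreover from this have "edge c"
      using \<open>E x y\<close> edge_def by blast
    moreover have "c \<in> Cmps"
      using cmps that by (simp add: c_def)
    moreover have "chain_height (pattern_order e cmp V c) V x < chain_height (pattern_order e cmp V c) V y"
      using \<open>finite V\<close> cmp_trans \<open>pattern_order e cmp V c x y\<close>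
      by (rule chain_height_pattern_order_strict_mono)
    ultimately show False
      using \<open>col x = col y\<close> by (auto simp: col_def dest!: fun_cong[of _ _ c])
  qed
  have "independent_set E {x\<in>V. col x = k}" for k
    unfolding independent_set_def
  proof (intro ballI impI)
    fix x y assume xy: "x \<in> {x\<in>V. col x = k}" "y \<in> {x\<in>V. col x = k}" "x \<noteq> y"
    then have "e x \<noteq> e y"
      using e by (auto dest: inj_onD)
    then consider "e x < e y" | "e y < e x"
      by linarith
    then show "\<not> E x y"
    proof cases
      case 2
      then show ?thesis
        using no_forward_edge[of y x] xy sym by auto
    qed (use no_forward_edge xy in simp)
  qed
  then have "card V \<le> card (Cmps \<rightarrow>\<^sub>E {..<s}) * (n - 1)"
    using card_le_if_colour_classes_independent[OF _ col_range _ no_indep] cmps(2)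
    by (simp add: finite_PiE)
  then show ?thesis
    using cmps(2) by (simp add: card_funcsetE)
qed

lemma card_le_if_edges_determined_by_type_and_comparison:
  fixes type :: "'a \<Rightarrow> 'k" and cmp :: "'a \<Rightarrow> 'a \<Rightarrow> 'c"
  assumes "finite V"
    and sym: "\<And>x y. x \<in> V \<Longrightarrow> y \<in> V \<Longrightarrow> x \<noteq> y \<Longrightarrow> E x y = E y x"
    and cmp_trans: "\<And>x y z. x \<in> V \<Longrightarrow> y \<in> V \<Longrightarrow> z \<in> V \<Longrightarrow> cmp x y = cmp y z \<Longrightarrow> cmp x z = cmp x y"
    and determined: "\<And>x y x' y'. x \<in> V \<Longrightarrow> y \<in> V \<Longrightarrow> x' \<in> V \<Longrightarrow> y' \<in> V \<Longrightarrow>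
      x \<noteq> y \<Longrightarrow> x' \<noteq> y' \<Longrightarrow> type y = type x \<Longrightarrow> type x' = type x \<Longrightarrow> type y' = type x \<Longrightarrow>
      cmp x y = cmp x' y' \<Longrightarrow> E x y = E x' y'"
    and no_clique: "\<And>K. K \<subseteq> V \<Longrightarrow> card K = s \<Longrightarrow> \<not> clique E K"
    and no_indep: "\<And>I. I \<subseteq> V \<Longrightarrow> card I = n \<Longrightarrow> \<not> independent_set E I"
    and types: "type ` V \<subseteq> Types" "finite Types"
    and cmps: "\<And>x y. x \<in> V \<Longrightarrow> y \<in> V \<Longrightarrow> cmp x y \<in> Cmps" "finite Cmps"
  shows "card V \<le> card Types * s ^ card Cmps * (n - 1)"
proof -
  have "card {x\<in>V. type x = k} \<le> s ^ card Cmps * (n - 1)" for k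
  proof (rule card_le_if_edges_determined_by_comparison[where cmp = cmp])
    let ?V = "{x\<in>V. type x = k}"
    show "finite ?V"
      using \<open>finite V\<close> by simp
    show "E x y = E y x" if "x \<in> ?V" "y \<in> ?V" "x \<noteq> y" for x y
      using sym that by simp
    show "cmp x z = cmp x y" if "x \<in> ?V" "y \<in> ?V" "z \<in> ?V" "cmp x y = cmp y z" for x y z
      using cmp_trans that by simp
    show "E x y = E x' y'"
      if "x \<in> ?V" "y \<in> ?V" "x' \<in> ?V" "y' \<in> ?V" "x \<noteq> y" "x' \<noteq> y'" "cmp x y = cmp x' y'"
      for x y x' y'
      using determined that by simp
    show "\<not> clique E K" if "K \<subseteq> ?V" "card K = s" for K
      using no_clique that by blast
    show "\<not> independent_set E I" if "I \<subseteq> ?V" "card I = n" for I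
      using no_indep that by blast
    show "cmp x y \<in> Cmps" if "x \<in> ?V" "y \<in> ?V" for x y
      using cmps that by simp
    show "finite Cmps"
      by fact
  qed
  then have "card V \<le> card Types * (s ^ card Cmps * (n - 1))"
    by (rule card_le_if_fibres_small[OF types(2,1)])
  then show ?thesis
    by (simp add: mult.assoc)
qed

definition rank_in :: "real set \<Rightarrow> real \<Rightarrow> nat" where
  "rank_in S v = card {w\<in>S. w < v}"

lemma rank_in_strict_mono:
  "finite S \<Longrightarrow> v \<in> S \<Longrightarrow> w \<in> S \<Longrightarrow> v < w \<Longrightarrow> rank_in S v < rank_in S w"
  unfolding rank_in_def by (rule psubset_card_mono) (auto intro: less_trans)

lemma rank_in_less_card: "finite S \<Longrightarrow> v \<in> S \<Longrightarrow> rank_in S v < card S"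
  unfolding rank_in_def by (rule psubset_card_mono) auto

lemma sgn_diff_rank_in:
  assumes "finite S" "v \<in> S" "w \<in> S"
  shows "sgn (v - w) = of_int (sgn (int (rank_in S v) - int (rank_in S w)))"
proof -
  consider "v < w" | "v = w" | "w < v"
    by fastforce
  then show ?thesis
    by cases (use rank_in_strict_mono[OF assms(1)] assms in \<open>force+\<close>)
qed

lemma rank_in_Un_image_less:
  assumes "finite V" "x \<in> V"
  shows "rank_in (u ` V \<union> w ` V) (u x) < 2 * card V" "rank_in (u ` V \<union> w ` V) (w x) < 2 * card V"
proof -
  have "card (u ` V \<union> w ` V) \<le> card (u ` V) + card (w ` V)"
    by (rule card_Un_le)
  also have "\<dots> \<le> 2 * card V"
    using card_image_le[OF \<open>finite V\<close>, of u] card_image_le[OF \<open>finite V\<close>, of w] by linarith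
  finally have card_le: "card (u ` V \<union> w ` V) \<le> 2 * card V" .
  have "finite (u ` V \<union> w ` V)" "u x \<in> u ` V \<union> w ` V" "w x \<in> u ` V \<union> w ` V"
    using assms by simp_all
  then show "rank_in (u ` V \<union> w ` V) (u x) < 2 * card V" "rank_in (u ` V \<union> w ` V) (w x) < 2 * card V"
    using rank_in_less_card card_le by (meson less_le_trans)+
qed

text \<open>The level of the highest binary digit in which a and b differ, counted from 1;
  it is 0 iff a = b.\<close>

definition split_level :: "nat \<Rightarrow> nat \<Rightarrow> nat" where
  "split_level a b = (LEAST k. a div 2 ^ k = b div 2 ^ k)"

lemma split_level_div_eq: "a div 2 ^ split_level a b = b div 2 ^ split_level a b"
  unfolding split_level_def
proof (rule LeastI)
  have "a < 2 ^ (a + b)" "b < 2 ^ (a + b)"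
    using less_exp[of "a + b"] by linarith+
  then show "a div 2 ^ (a + b) = b div 2 ^ (a + b)"
    by simp
qed

lemma split_level_le: "a < 2 ^ D \<Longrightarrow> b < 2 ^ D \<Longrightarrow> split_level a b \<le> D"
  unfolding split_level_def by (rule Least_le) simp

lemma split_level_Suc_neq: "split_level a b = Suc k \<Longrightarrow> a div 2 ^ k \<noteq> b div 2 ^ k"
  using not_less_Least[of k "\<lambda>k. a div 2 ^ k = b div 2 ^ k"] unfolding split_level_def by simp

lemma less_of_div_less: "(a :: nat) div q < b div q \<Longrightarrow> a < b"
  using div_le_mono not_less by blast

lemma digits_below_split:
  fixes a b k :: nat
  assumes "a div 2 ^ Suc k = b div 2 ^ Suc k" "a div 2 ^ k \<noteq> b div 2 ^ k" "a < b"
  shows "a div 2 ^ k = 2 * (a div 2 ^ Suc k)" "b div 2 ^ k = 2 * (a div 2 ^ Suc k) + 1"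
proof -
  have halve: "x div 2 ^ Suc k = x div 2 ^ k div 2" for x :: nat
    by (simp only: power_Suc2 div_mult2_eq)
  have digits: "A = 2 * (A div 2) \<and> B = 2 * (A div 2) + 1"
    if "A div 2 = B div 2" "A \<noteq> B" "A \<le> B" for A B :: nat
    using that by presburger
  have "a div 2 ^ k \<le> b div 2 ^ k"
    using \<open>a < b\<close> by (simp add: div_le_mono)
  then show "a div 2 ^ k = 2 * (a div 2 ^ Suc k)" "b div 2 ^ k = 2 * (a div 2 ^ Suc k) + 1"
    using digits[of "a div 2 ^ k" "b div 2 ^ k"] assms(1,2) unfolding halve by simp_all
qed

lemma sgn_diff_at_common_prefix:
  fixes a b a' b' m :: nat
  assumes "split_level a b = m" "split_level a' b' = m" "a div 2 ^ m = a' div 2 ^ m"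
    and same_dir: "sgn (int a - int b) = sgn (int a' - int b')"
  shows "sgn (int a - int b') = sgn (int a - int b)"
proof -
  have ab: "a div 2 ^ m = b div 2 ^ m" and a'b': "a' div 2 ^ m = b' div 2 ^ m"
    using split_level_div_eq assms(1,2) by metis+
  show ?thesis
  proof (cases m)
    case 0
    then show ?thesis
      using ab a'b' assms(3) by simp
  next
    case (Suc k)
    have ab_k: "a div 2 ^ k \<noteq> b div 2 ^ k" and a'b'_k: "a' div 2 ^ k \<noteq> b' div 2 ^ k"
      using split_level_Suc_neq[of a b k] split_level_Suc_neq[of a' b' k] assms(1,2) Suc
      by simp_all
    then consider "a < b" "a' < b'" | "b < a" "b' < a'"
      using same_dir by (cases a b rule: linorder_cases; cases a' b' rule: linorder_cases)
        (auto simp: sgn_if)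
    then show ?thesis
    proof cases
      case 1
      then have "a div 2 ^ k < b' div 2 ^ k"
        using digits_below_split[of a k b] digits_below_split[of a' k b'] ab a'b' ab_k a'b'_k
          assms(3) Suc by simp
      then show ?thesis
        using less_of_div_less[of a "2 ^ k" b'] 1 by simp
    next
      case 2
      then have "b' div 2 ^ k < a div 2 ^ k"
        using digits_below_split[of b k a] digits_below_split[of b' k a'] ab a'b' ab_k a'b'_k
          assms(3) Suc by simp
      then show ?thesis
        using less_of_div_less[of b' "2 ^ k" a] 2 by simp
    qed
  qed
qed

lemma sgn_diff_at_split_level:
  fixes a b a' b' m :: nat
  assumes "split_level a b = m" "split_level a' b' = m"
    and same_dir: "sgn (int a - int b) = sgn (int a' - int b')"
  shows "sgn (int a - int b') =
    (if a div 2 ^ m = a' div 2 ^ m then sgn (int a - int b)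
     else sgn (int (a div 2 ^ m) - int (a' div 2 ^ m)))"
proof -
  have a'b': "a' div 2 ^ m = b' div 2 ^ m"
    using split_level_div_eq assms(2) by metis
  consider "a div 2 ^ m < a' div 2 ^ m" | "a' div 2 ^ m < a div 2 ^ m" | "a div 2 ^ m = a' div 2 ^ m"
    by linarith
  then show ?thesis
  proof cases
    case 1
    then have "a < b'"
      using a'b' less_of_div_less by metis
    then show ?thesis
      using 1 by simp
  next
    case 2
    then have "b' < a"
      using a'b' less_of_div_less by metis
    then show ?thesis
      using 2 by simp
  next
    case 3
    then show ?thesis
      using sgn_diff_at_common_prefix[OF assms(1,2) 3 same_dir] by simp
  qed
qed

lemma dyadic_sign_classification:
  fixes u w :: "'i \<Rightarrow> 'a \<Rightarrow> real"
  assumes "finite V" "2 * card V \<le> 2 ^ D"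
  obtains \<tau> :: "'i \<Rightarrow> 'a \<Rightarrow> nat \<times> int" and p :: "'i \<Rightarrow> 'a \<Rightarrow> nat"
  where "\<And>i. \<tau> i ` V \<subseteq> {0..D} \<times> {-1, 0, 1}"
    and "\<And>i x y. x \<in> V \<Longrightarrow> y \<in> V \<Longrightarrow> \<tau> i x = \<tau> i y \<Longrightarrow>
      sgn (u i x - w i y) = of_int (if p i x = p i y then snd (\<tau> i x) else sgn (int (p i x) - int (p i y)))"
proof -
  define S where "S i = u i ` V \<union> w i ` V" for i
  define \<alpha> where "\<alpha> i x = rank_in (S i) (u i x)" for i x
  define \<beta> where "\<beta> i x = rank_in (S i) (w i x)" for i x
  have \<alpha>_less: "\<alpha> i x < 2 ^ D" and \<beta>_less: "\<beta> i x < 2 ^ D" if "x \<in> V" for i x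
    using rank_in_Un_image_less[OF \<open>finite V\<close> that, of "u i" "w i"] assms(2)
    unfolding \<alpha>_def \<beta>_def S_def by linarith+
  define lvl where "lvl i x = split_level (\<alpha> i x) (\<beta> i x)" for i x
  define \<tau> where "\<tau> i x = (lvl i x, sgn (int (\<alpha> i x) - int (\<beta> i x)))" for i x
  define p where "p i x = \<alpha> i x div 2 ^ lvl i x" for i x
  show thesis
  proof
    fix i
    have "lvl i x \<le> D" if "x \<in> V" for x
      using split_level_le \<alpha>_less \<beta>_less that by (simp add: lvl_def)
    moreover have "sgn k \<in> {-1, 0, 1}" for k :: int
      by (simp add: sgn_if)
    ultimately show "\<tau> i ` V \<subseteq> {0..D} \<times> {-1, 0, 1}"
      by (auto simp: \<tau>_def)
  next
    fix i x y assume "x \<in> V" "y \<in> V" "\<tau> i x = \<tau> i y"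
    have "sgn (u i x - w i y) = of_int (sgn (int (\<alpha> i x) - int (\<beta> i y)))"
      unfolding \<alpha>_def \<beta>_def using \<open>finite V\<close> \<open>x \<in> V\<close> \<open>y \<in> V\<close>
      by (intro sgn_diff_rank_in) (auto simp: S_def)
    also have "sgn (int (\<alpha> i x) - int (\<beta> i y)) =
        (if p i x = p i y then snd (\<tau> i x) else sgn (int (p i x) - int (p i y)))"
      using sgn_diff_at_split_level[of "\<alpha> i x" "\<beta> i x" "lvl i x" "\<alpha> i y" "\<beta> i y"] \<open>\<tau> i x = \<tau> i y\<close>
      by (simp add: \<tau>_def p_def lvl_def)
    finally show "sgn (u i x - w i y) =
        of_int (if p i x = p i y then snd (\<tau> i x) else sgn (int (p i x) - int (p i y)))" .
  qed
qed

lemma sign_pattern_eqI: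
  assumes "\<And>i. i < t \<Longrightarrow> sgn (f i x y) = sgn (g i x' y')"
  shows "sign_pattern t f x y = sign_pattern t g x' y'"
  unfolding sign_pattern_def
proof (rule arg_cong[where f = concat], rule map_cong[OF refl])
  fix i assume "i \<in> set [0..<t]"
  then have "sgn (f i x y) = sgn (g i x' y')"
    using assms by simp
  then show "[f i x y < 0, f i x y \<le> 0, f i x y = 0] = [g i x' y' < 0, g i x' y' \<le> 0, g i x' y' = 0]"
    by (auto simp: sgn_if split: if_splits)
qed

lemma sign_pattern_eq_if_types_and_comparisons_eq:
  assumes "\<And>i. i < t \<Longrightarrow> \<tau> i y = \<tau> i x \<and> \<tau> i x' = \<tau> i x \<and> \<tau> i y' = \<tau> i x"
    and "\<And>i. i < t \<Longrightarrow> sgn (int (p i x) - int (p i y)) = sgn (int (p i x') - int (p i y'))"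
    and sgn_f: "\<And>i x y. x \<in> V \<Longrightarrow> y \<in> V \<Longrightarrow> \<tau> i x = \<tau> i y \<Longrightarrow>
      sgn (f i x y) = of_int (if p i x = p i y then snd (\<tau> i x) else sgn (int (p i x) - int (p i y)))"
    and "x \<in> V" "y \<in> V" "x' \<in> V" "y' \<in> V"
  shows "sign_pattern t f x y = sign_pattern t f x' y'"
proof (rule sign_pattern_eqI)
  fix i assume "i < t"
  have "int (p i x) - int (p i y) = 0 \<longleftrightarrow> int (p i x') - int (p i y') = 0"
    using assms(2)[OF \<open>i < t\<close>] by (metis sgn_eq_0_iff)
  then have "p i x = p i y \<longleftrightarrow> p i x' = p i y'"
    by simp
  then show "sgn (f i x y) = sgn (f i x' y')"
    using assms(1,2)[OF \<open>i < t\<close>] sgn_f assms(4-7) by simp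
qed

lemma sgn_diff_trans: "sgn (a - b) = sgn (b - c) \<Longrightarrow> sgn (a - c) = sgn (a - b)" for a b c :: int
  by (auto simp: sgn_if split: if_splits)

lemma semilinear_graph_card_le:
  assumes "semilinear_graph t V E" "\<not> has_clique V E s" "\<not> has_indep V E n"
    and "2 * card V \<le> 2 ^ D"
  shows "card V \<le> (3 * (D + 1)) ^ t * s ^ 3 ^ t * (n - 1)"
proof -
  obtain d b a c \<phi> where "finite V"
    and sym: "\<forall>x\<in>V. \<forall>y\<in>V. x \<noteq> y \<longrightarrow> (E x y \<longleftrightarrow> E y x)"
    and rep: "\<forall>x\<in>V. \<forall>y\<in>V. x \<noteq> y \<longrightarrow>
      (E x y \<longleftrightarrow> \<phi> (sign_pattern t (\<lambda>i. lin_eval d (b i) (a i) (c i)) x y))"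
    using assms(1) unfolding semilinear_graph_def by (elim conjE exE) (rule that)
  define f where "f = (\<lambda>i. lin_eval d (b i) (a i) (c i))"
  define u where "u i x = (\<Sum>j<d. a i j * x ! j)" for i x
  define w where "w i y = - b i - (\<Sum>j<d. c i j * y ! j)" for i y
  have f_eq: "f i x y = u i x - w i y" for i x y
    by (simp add: f_def lin_eval_def u_def w_def)
  obtain \<tau> p where \<tau>: "\<And>i. \<tau> i ` V \<subseteq> {0..D} \<times> {-1, 0, 1}"
    and sgn_f: "\<And>i x y. x \<in> V \<Longrightarrow> y \<in> V \<Longrightarrow> \<tau> i x = \<tau> i y \<Longrightarrow>
      sgn (f i x y) = of_int (if p i x = p i y then snd (\<tau> i x) else sgn (int (p i x) - int (p i y)))"
    unfolding f_eq using dyadic_sign_classification[OF \<open>finite V\<close> assms(4)] by blast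
  define type where "type x = map (\<lambda>i. \<tau> i x) [0..<t]" for x
  define cmp where "cmp x y = map (\<lambda>i. sgn (int (p i x) - int (p i y))) [0..<t]" for x y
  define Types where "Types = {xs. set xs \<subseteq> {0..D} \<times> {-1, 0, 1 :: int} \<and> length xs = t}"
  define Cmps where "Cmps = {xs. set xs \<subseteq> {-1, 0, 1 :: int} \<and> length xs = t}"
  have "card V \<le> card Types * s ^ card Cmps * (n - 1)"
  proof (rule card_le_if_edges_determined_by_type_and_comparison[where type = type and cmp = cmp])
    show "finite V"
      by fact
    show "E x y = E y x" if "x \<in> V" "y \<in> V" "x \<noteq> y" for x y
      using sym that by blast
    show "cmp x z = cmp x y" if "cmp x y = cmp y z" for x y z
      using that sgn_diff_trans unfolding cmp_def map_eq_conv by blast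
    show "E x y = E x' y'"
      if "x \<in> V" "y \<in> V" "x' \<in> V" "y' \<in> V" "x \<noteq> y" "x' \<noteq> y'" "type y = type x"
        "type x' = type x" "type y' = type x" "cmp x y = cmp x' y'" for x y x' y'
    proof -
      have "\<tau> i y = \<tau> i x \<and> \<tau> i x' = \<tau> i x \<and> \<tau> i y' = \<tau> i x" if "i < t" for i
        using that \<open>type y = type x\<close> \<open>type x' = type x\<close> \<open>type y' = type x\<close>
        unfolding type_def map_eq_conv by auto
      moreover have "sgn (int (p i x) - int (p i y)) = sgn (int (p i x') - int (p i y'))" if "i < t" for i
        using that \<open>cmp x y = cmp x' y'\<close> unfolding cmp_def map_eq_conv by auto
      ultimately have "sign_pattern t f x y = sign_pattern t f x' y'"
        using sgn_f that(1-4) by (rule sign_pattern_eq_if_types_and_comparisons_eq)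
      then show ?thesis
        using rep[folded f_def] that by auto
    qed
    show "\<not> clique E K" if "K \<subseteq> V" "card K = s" for K
      using assms(2) that by (auto simp: has_clique_def clique_def)
    show "\<not> independent_set E I" if "I \<subseteq> V" "card I = n" for I
      using assms(3) that by (auto simp: has_indep_def independent_set_def)
    show "type ` V \<subseteq> Types"
    proof (rule image_subsetI)
      fix x assume "x \<in> V"
      then have "set (type x) \<subseteq> {0..D} \<times> {-1, 0, 1}"
        unfolding type_def set_map using \<tau> by blast
      then show "type x \<in> Types"
        by (simp add: Types_def type_def)
    qed
    show "cmp x y \<in> Cmps" for x y
      by (auto simp: cmp_def Cmps_def sgn_if)
    show "finite Types" "finite Cmps"
      by (simp_all add: Types_def Cmps_def finite_lists_length_eq)
  qed
  also have "card Types = card ({0..D} \<times> {-1, 0, 1 :: int}) ^ t"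
    unfolding Types_def by (simp add: card_lists_length_eq)
  also have "card ({0..D} \<times> {-1, 0, 1 :: int}) = 3 * (D + 1)"
    by (simp add: card_cartesian_product)
  also have "card Cmps = card {-1, 0, 1 :: int} ^ t"
    unfolding Cmps_def by (simp add: card_lists_length_eq)
  also have "card {-1, 0, 1 :: int} = 3"
    by simp
  finally show ?thesis .
qed

lemma le_square_if_le_power_of_log:
  fixes x A a b :: real and t :: nat
  assumes "t > 0" "x \<ge> 1" "A > 0" "a \<ge> 0" "b \<ge> 0"
    and x_le: "x \<le> A * (a * ln x + b) ^ t"
  shows "x \<le> (A * (2 * a * t + b) ^ t)\<^sup>2"
proof -
  define y where "y = x powr (1 / (2 * t))"
  have "y \<ge> 1"
    unfolding y_def using assms(1,2) by (simp add: ge_one_powr_ge_zero)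
  have "ln x \<le> y / (1 / (2 * t))"
    unfolding y_def by (rule ln_powr_bound) (use assms(1,2) in auto)
  then have "a * ln x \<le> 2 * t * a * y"
    using \<open>a \<ge> 0\<close> by (simp add: mult_left_mono mult.commute mult.left_commute)
  moreover have "b \<le> b * y"
    using \<open>b \<ge> 0\<close> \<open>y \<ge> 1\<close> by (simp add: mult_le_cancel_left1)
  ultimately have "a * ln x + b \<le> (2 * a * t + b) * y"
    by (simp add: algebra_simps)
  moreover have "0 \<le> a * ln x + b"
    using assms(2,4,5) by simp
  ultimately have "(a * ln x + b) ^ t \<le> ((2 * a * t + b) * y) ^ t"
    by (simp add: power_mono)
  also have "\<dots> = (2 * a * t + b) ^ t * sqrt x"
  proof -
    have "y ^ t = x powr (1 / (2 * t) * t)"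
      unfolding y_def using assms(2) by (simp add: powr_realpow[symmetric] powr_powr)
    also have "\<dots> = sqrt x"
      using assms(1,2) by (simp add: powr_half_sqrt)
    finally show ?thesis
      by (simp add: power_mult_distrib)
  qed
  finally have "A * (a * ln x + b) ^ t \<le> A * ((2 * a * t + b) ^ t * sqrt x)"
    using \<open>A > 0\<close> by (simp add: mult_left_mono)
  with x_le have "sqrt x * sqrt x \<le> A * (2 * a * t + b) ^ t * sqrt x"
    using assms(2) by (simp add: mult.assoc)
  then have "sqrt x \<le> A * (2 * a * t + b) ^ t"
    by (rule mult_right_le_imp_le) (use assms(2) in simp)
  then have "(sqrt x)\<^sup>2 \<le> (A * (2 * a * t + b) ^ t)\<^sup>2"
    by (rule power_mono) (use assms(2) in simp)
  then show ?thesis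
    using assms(2) by simp
qed

lemma ln_le_if_le_power_of_log:
  fixes x a b :: real and s n B t :: nat
  assumes "t > 0" "x \<ge> 1" "s \<ge> 1" "n \<ge> 1" "a \<ge> 0" "b \<ge> 1"
    and x_le: "x \<le> real n * real s ^ B * (a * ln x + b) ^ t"
  shows "ln x \<le> 2 * (ln n + B * ln s + t * ln (2 * a * t + b))"
proof -
  define C where "C = 2 * a * t + b"
  have "0 \<le> 2 * a * t"
    using assms(5) by simp
  then have "C \<ge> 1"
    unfolding C_def using assms(6) by linarith
  have A_pos: "real n * real s ^ B > 0"
    using assms(3,4) by simp
  have "x \<le> (real n * real s ^ B * C ^ t)\<^sup>2"
    unfolding C_def using le_square_if_le_power_of_log[OF assms(1,2) A_pos assms(5)] assms(6) x_le
    by simp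
  moreover have "0 < (real n * real s ^ B * C ^ t)\<^sup>2"
    using assms(3,4) \<open>C \<ge> 1\<close> by simp
  ultimately have "ln x \<le> ln ((real n * real s ^ B * C ^ t)\<^sup>2)"
    using assms(2) by simp
  also have "\<dots> = 2 * (ln n + B * ln s + t * ln C)"
    using assms(3,4) \<open>C \<ge> 1\<close> by (simp add: ln_mult_pos ln_realpow)
  finally show ?thesis
    by (simp add: C_def)
qed

lemma le_polylog_if_le_power_of_log:
  fixes x a b :: real and s n B t :: nat
  assumes "t > 0" "x \<ge> 1" "s \<ge> 1" "n \<ge> 2" "a \<ge> 0" "b \<ge> 1"
    and x_le: "x \<le> real n * real s ^ B * (a * ln x + b) ^ t"
  shows "x \<le> (2 * a + 2 * b + 4 * a * B + 4 * a * t * ln (2 * a * t + b)) ^ t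
    * real s ^ (B + t) * real n * ln (real n) ^ t"
proof -
  define C where "C = 2 * a * t + b"
  define K where "K = 2 * a + 2 * b + 4 * a * B + 4 * a * t * ln C"
  define L where "L = ln n"
  have ln_x: "ln x \<le> 2 * (L + B * ln s + t * ln C)"
    unfolding L_def C_def using assms by (intro ln_le_if_le_power_of_log) simp_all
  have "0 \<le> 2 * a * t"
    using assms(5) by simp
  then have "C \<ge> 1"
    unfolding C_def using assms(6) by linarith
  then have "ln C \<ge> 0"
    by simp
  have "ln 2 \<le> L"
    using assms(4) by (simp add: L_def)
  then have "2 * L \<ge> 1"
    using ln2_ge_two_thirds by linarith
  have "ln s \<le> s"
    using assms(3) by (simp add: ln_bound)
  have "a * ln x + b \<le> 2 * a * L + 2 * a * B * ln s + (2 * a * t * ln C + b)"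
    using mult_left_mono[OF ln_x \<open>a \<ge> 0\<close>] by (simp add: algebra_simps)
  also have "\<dots> \<le> 2 * a * (s * L) + 2 * a * B * (s * (2 * L)) + (2 * a * t * ln C + b) * (s * (2 * L))"
  proof -
    have "1 * 1 \<le> s * (2 * L)"
      using assms(3) \<open>2 * L \<ge> 1\<close> by (intro mult_mono) simp_all
    moreover have "0 \<le> 2 * a * t * ln C"
      using \<open>a \<ge> 0\<close> \<open>ln C \<ge> 0\<close> by (intro mult_nonneg_nonneg) simp_all
    ultimately have "2 * a * t * ln C + b \<le> (2 * a * t * ln C + b) * (s * (2 * L))"
      using assms(6) by (simp add: mult_le_cancel_left1)
    moreover have "2 * a * L \<le> 2 * a * (s * L)"
      using \<open>a \<ge> 0\<close> \<open>2 * L \<ge> 1\<close> assms(3) by (intro mult_left_mono) (simp_all add: mult_le_cancel_right1)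
    moreover have "2 * a * B * ln s \<le> 2 * a * B * (s * (2 * L))"
      using \<open>a \<ge> 0\<close> \<open>2 * L \<ge> 1\<close> \<open>ln s \<le> s\<close>
      by (intro mult_left_mono) (simp_all add: mult_le_cancel_left1 order.trans)
    ultimately show ?thesis
      by linarith
  qed
  also have "\<dots> = K * s * L"
    by (simp add: K_def algebra_simps)
  finally have "a * ln x + b \<le> K * s * L" .
  moreover have "0 \<le> a * ln x + b"
    using assms(2,5,6) by simp
  ultimately have "(a * ln x + b) ^ t \<le> (K * s * L) ^ t"
    by (rule power_mono)
  then have "real n * real s ^ B * (a * ln x + b) ^ t \<le> real n * real s ^ B * (K * s * L) ^ t"
    by (rule mult_left_mono) simp
  with x_le have "x \<le> real n * real s ^ B * (K * s * L) ^ t"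
    by linarith
  also have "\<dots> = K ^ t * real s ^ (B + t) * real n * L ^ t"
    by (simp add: power_mult_distrib power_add)
  finally show ?thesis
    by (simp add: K_def C_def L_def)
qed

lemma ceillog2_double_le_ln:
  assumes "R \<ge> 1"
  shows "real (3 * (ceillog2 (2 * R) + 1)) \<le> 6 * ln R + 9"
proof -
  have "real (ceillog2 (2 * R)) < log 2 (real (2 * R)) + 1"
    using assms by (intro ceillog2_less_log) simp
  also have "log 2 (real (2 * R)) = 1 + log 2 R"
    using assms by (simp add: log_mult)
  also have "log 2 R \<le> 2 * ln R"
  proof -
    have "ln R * 1 \<le> ln R * (2 * ln 2)"
      using ln2_ge_two_thirds assms by (intro mult_left_mono) simp_all
    then show ?thesis
      by (simp add: log_def divide_le_eq algebra_simps)
  qed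
  finally show ?thesis
    by simp
qed

lemma R_semilin_le_power_of_log:
  assumes "s > 0" "n > 0" "R_semilin t s n > 0"
  shows "real (R_semilin t s n) \<le> real n * real s ^ 3 ^ t * (6 * ln (R_semilin t s n) + 9) ^ t"
proof -
  define R where "R = R_semilin t s n"
  have "R - 1 < R"
    using assms(3) by (simp add: R_def)
  then obtain V E where VE: "semilinear_graph t V E" "card V = R - 1"
    "\<not> has_clique V E s" "\<not> has_indep V E n"
    using not_less_Least unfolding R_def R_semilin_def by blast
  define D where "D = ceillog2 (2 * R)"
  have "2 * card V \<le> 2 ^ D"
    using le_two_power_ceillog2[of "2 * R"] VE(2) by (simp add: D_def)
  define K where "K = (3 * (D + 1)) ^ t * s ^ 3 ^ t"
  have "card V \<le> K * (n - 1)"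
    unfolding K_def using VE \<open>2 * card V \<le> 2 ^ D\<close> by (intro semilinear_graph_card_le)
  moreover have "K \<ge> 1"
    using assms(1) by (simp add: K_def)
  moreover have "K * n = K * (n - 1) + K"
    using assms(2) by (cases n) simp_all
  ultimately have "R \<le> K * n"
    using VE(2) by linarith
  then have "real R \<le> real (K * n)"
    by (simp only: of_nat_le_iff)
  also have "\<dots> = real n * real s ^ 3 ^ t * real (3 * (D + 1)) ^ t"
    unfolding K_def by (simp only: of_nat_mult of_nat_power mult_ac)
  finally have R_le: "real R \<le> real n * real s ^ 3 ^ t * real (3 * (D + 1)) ^ t" .
  have "R \<ge> 1"
    using assms(3) by (simp add: R_def)
  then have "real (3 * (D + 1)) \<le> 6 * ln R + 9"
    unfolding D_def by (rule ceillog2_double_le_ln)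
  then have "real (3 * (D + 1)) ^ t \<le> (6 * ln R + 9) ^ t"
    by (intro power_mono) simp_all
  then have "real n * real s ^ 3 ^ t * real (3 * (D + 1)) ^ t \<le> real n * real s ^ 3 ^ t * (6 * ln R + 9) ^ t"
    by (rule mult_left_mono) simp
  with R_le have "real R \<le> real n * real s ^ 3 ^ t * (6 * ln R + 9) ^ t"
    by (rule order.trans)
  then show ?thesis
    by (simp add: R_def)
qed

theorem theorem1p1:
  fixes t :: nat
  assumes "t > 0"
  shows "\<exists>\<alpha> \<beta> \<gamma> :: real. \<alpha> > 0 \<and> \<beta> > 0 \<and> \<gamma> > 0 \<and>
           (\<forall>s n :: nat. s > 0 \<longrightarrow> n \<ge> 2 \<longrightarrow>
              real (R_semilin t s n) \<le> \<alpha> * real s powr \<beta> * real n * ln (real n) powr \<gamma>)"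
proof (intro exI conjI allI impI)
  define K :: real where "K = 30 + 24 * 3 ^ t + 24 * t * ln (12 * t + 9)"
  have "K > 0"
    unfolding K_def by (simp add: add_pos_nonneg)
  then show "K ^ t > 0" "real (3 ^ t + t) > 0" "real t > 0"
    using assms by (simp_all add: add_pos_pos)
  fix s n :: nat assume "s > 0" "n \<ge> 2"
  show "R_semilin t s n \<le> K ^ t * s powr real (3 ^ t + t) * n * ln n powr real t"
  proof (cases "R_semilin t s n = 0")
    case False
    then have "real (R_semilin t s n) \<le> real n * real s ^ 3 ^ t * (6 * ln (R_semilin t s n) + 9) ^ t"
      using \<open>s > 0\<close> \<open>n \<ge> 2\<close> by (intro R_semilin_le_power_of_log) simp_all
    then have "real (R_semilin t s n) \<le> (2 * 6 + 2 * 9 + 4 * 6 * real (3 ^ t) + 4 * 6 * real t * ln (2 * 6 * real t + 9)) ^ t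
        * real s ^ (3 ^ t + t) * real n * ln (real n) ^ t"
      using assms False \<open>s > 0\<close> \<open>n \<ge> 2\<close> by (intro le_polylog_if_le_power_of_log) simp_all
    moreover have "real s powr real (3 ^ t + t) = real s ^ (3 ^ t + t)"
      using \<open>s > 0\<close> by (intro powr_realpow) simp
    moreover have "ln (real n) powr real t = ln (real n) ^ t"
      using \<open>n \<ge> 2\<close> by (intro powr_realpow) simp
    ultimately show ?thesis
      by (simp add: K_def)
  qed (use \<open>K > 0\<close> \<open>n \<ge> 2\<close> in simp)
qed

end
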